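(* For every $n\ge1$, the set $\mathrm{StoRec}_n$ of SR states on $K_n^0$ equals $\mathrm{conv}(\mathrm{DetRec}_n)\cap\mathbb{Z}^n$, where $\mathrm{DetRec}_n$ is the set of DR states on $K_n^0$. That is, $c\in\mathbb{Z}_{\ge 0}^n$ is SR if and only if there exist DR states $c^{(1)},\dots,c^{(k)}$ and $\lambda_1,\dots,\lambda_k\in[0,1]$ with $\sum_i\lambda_i=1$ and $c=\sum_i\lambda_i c^{(i)}$.
   Context: $K_n^0$ is the complete graph on vertex set $\{0,1,\dots,n\}$ with sink $0$; every vertex has degree $n$. A configuration is $c\in\mathbb{Z}_{\ge0}^n$, stable if $c_i\le n-1$ for all $i$. ASM: an unstable vertex topples by sending one grain to each neighbour (grains to the sink disappear). SSM (parameter $p\in(0,1)$): an unstable vertex $i$, independently for each incident edge, sends one grain along it with probability $p$, otherwise keeps it. Each model gives a Markov chain on stable configurations: add a grain at vertex $i$ with probability $\mu_i>0$, then stabilise. DR = recurrent for the ASM chain, SR = recurrent for the SSM chain. $\mathrm{conv}$ denotes convex hull in $\mathbb{R}^n$. *)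

theory Defs
  imports "HOL-Analysis.Analysis"
begin

text \<open>Sandpile models on the complete graph K_n^0. The non-sink vertices are the
elements of a finite type 'n (so n = CARD('n) >= 1); the sink is represented by None
in 'n option. Every vertex has degree n.\<close>

definition stable :: "('n::finite \<Rightarrow> nat) \<Rightarrow> bool" where
  "stable c \<longleftrightarrow> (\<forall>i. c i \<le> CARD('n) - 1)"

definition nbrs :: "'n::finite \<Rightarrow> 'n option set" where
  "nbrs v = insert None (Some ` (UNIV - {v}))"

definition asm_topple :: "('n::finite \<Rightarrow> nat) \<Rightarrow> 'n \<Rightarrow> ('n \<Rightarrow> nat) \<Rightarrow> bool" where
  "asm_topple c v d \<longleftrightarrow> CARD('n) \<le> c v \<and>
     d = (\<lambda>w. if w = v then c v - CARD('n) else c w + 1)"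

text \<open>SSM toppling of an unstable vertex v with parameter p: the set S of edges along
which a grain is sent is chosen with probability p^|S| (1-p)^(n-|S|); a toppling outcome
is possible iff this probability is positive.\<close>
definition ssm_topple :: "real \<Rightarrow> ('n::finite \<Rightarrow> nat) \<Rightarrow> 'n \<Rightarrow> ('n \<Rightarrow> nat) \<Rightarrow> bool" where
  "ssm_topple p c v d \<longleftrightarrow> CARD('n) \<le> c v \<and>
     (\<exists>S. S \<subseteq> nbrs v \<and> p ^ card S * (1 - p) ^ (CARD('n) - card S) > 0 \<and>
        d = (\<lambda>w. if w = v then c v - card S else if Some w \<in> S then c w + 1 else c w))"

definition stabilises_to ::
  "(('n::finite \<Rightarrow> nat) \<Rightarrow> 'n \<Rightarrow> ('n \<Rightarrow> nat) \<Rightarrow> bool) \<Rightarrow> ('n \<Rightarrow> nat) \<Rightarrow> ('n \<Rightarrow> nat) \<Rightarrow> bool" where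
  "stabilises_to tp c d \<longleftrightarrow> (\<lambda>x y. \<exists>v. tp x v y)\<^sup>*\<^sup>* c d \<and> stable d"

text \<open>One step of the Markov chain on stable configurations, with positive probability:
add a grain at i (probability mu i), then stabilise.\<close>
definition chain_step ::
  "('n::finite \<Rightarrow> real) \<Rightarrow> (('n \<Rightarrow> nat) \<Rightarrow> 'n \<Rightarrow> ('n \<Rightarrow> nat) \<Rightarrow> bool) \<Rightarrow> ('n \<Rightarrow> nat) \<Rightarrow> ('n \<Rightarrow> nat) \<Rightarrow> bool" where
  "chain_step \<mu> tp c d \<longleftrightarrow> stable c \<and> (\<exists>i. \<mu> i > 0 \<and> stabilises_to tp (c(i := c i + 1)) d)"

definition recurrent ::
  "('n::finite \<Rightarrow> real) \<Rightarrow> (('n \<Rightarrow> nat) \<Rightarrow> 'n \<Rightarrow> ('n \<Rightarrow> nat) \<Rightarrow> bool) \<Rightarrow> ('n \<Rightarrow> nat) \<Rightarrow> bool" where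
  "recurrent \<mu> tp c \<longleftrightarrow> stable c \<and>
     (\<forall>d. (chain_step \<mu> tp)\<^sup>*\<^sup>* c d \<longrightarrow> (chain_step \<mu> tp)\<^sup>*\<^sup>* d c)"

definition DR :: "('n::finite \<Rightarrow> real) \<Rightarrow> ('n \<Rightarrow> nat) \<Rightarrow> bool" where
  "DR \<mu> c \<longleftrightarrow> recurrent \<mu> asm_topple c"

definition SR :: "real \<Rightarrow> ('n::finite \<Rightarrow> real) \<Rightarrow> ('n \<Rightarrow> nat) \<Rightarrow> bool" where
  "SR p \<mu> c \<longleftrightarrow> recurrent \<mu> (ssm_topple p) c"

definition vec_of :: "('n::finite \<Rightarrow> nat) \<Rightarrow> real ^ 'n" where
  "vec_of c = (\<chi> i. real (c i))"

end

theory Submission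
  imports Defs "HOL-Library.Confluence"
begin

text \<open>Both chains are recurrent exactly on the stable configurations reachable from the
  maximal stable configuration \<open>n - 1\<close>. For the stochastic model the bound
  \<open>\<Sum>i\<in>A. c i \<ge> |A| choose 2\<close> holds there and survives adding grains and topplings,
  because a toppling vertex of \<open>A\<close> loses at most one grain per edge leaving \<open>A\<close>;
  conversely, every stable configuration satisfying the bound has a predecessor satisfying it
  with fewer deficient vertices (raise a deficient vertex to \<open>n - 1\<close>, remove a grain from
  each of suitably many other large deficient vertices), so the bound characterises SR. The
  bound cuts out a convex polytope containing the DR states, which are SR. Conversely, by
  Dhar's burning algorithm the stable configurations without forbidden subconfiguration are
  DR, and a configuration satisfying the bound that has a forbidden subconfiguration is the
  midpoint of two such configurations with a larger sum of squares, obtained by moving one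
  grain between two deficient vertices of equal height.\<close>

section \<open>Recurrence\<close>

abbreviation topple_step ::
  "(('n::finite \<Rightarrow> nat) \<Rightarrow> 'n \<Rightarrow> ('n \<Rightarrow> nat) \<Rightarrow> bool) \<Rightarrow> ('n \<Rightarrow> nat) \<Rightarrow> ('n \<Rightarrow> nat) \<Rightarrow> bool"
  where "topple_step tp \<equiv> \<lambda>x y. \<exists>v. tp x v y"

definition max_stable :: "'n::finite \<Rightarrow> nat" where
  "max_stable = (\<lambda>_. CARD('n) - 1)"

definition deficient :: "('n::finite \<Rightarrow> nat) \<Rightarrow> 'n set" where
  "deficient c = {i. c i < CARD('n) - 1}"

lemma stable_max_stable: "stable (max_stable :: 'n::finite \<Rightarrow> nat)"
  by (simp add: stable_def max_stable_def)

lemma stable_eq_max_stable: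
  fixes c :: "'n::finite \<Rightarrow> nat"
  shows "stable c \<Longrightarrow> deficient c = {} \<Longrightarrow> c = max_stable"
  unfolding stable_def deficient_def max_stable_def fun_eq_iff
  by (metis (mono_tags, lifting) empty_Collect_eq le_antisym not_less)

lemma chain_step_stable: "chain_step \<mu> tp c d \<Longrightarrow> stable d"
  by (auto simp: chain_step_def stabilises_to_def)

lemma chain_steps_stable: "(chain_step \<mu> tp)\<^sup>*\<^sup>* c d \<Longrightarrow> stable c \<Longrightarrow> stable d"
  by (induction rule: rtranclp_induct) (auto dest: chain_step_stable)

lemma chain_stepI:
  "stable c \<Longrightarrow> \<mu> i > 0 \<Longrightarrow> (topple_step tp)\<^sup>*\<^sup>* (c(i := c i + 1)) d \<Longrightarrow> stable d
    \<Longrightarrow> chain_step \<mu> tp c d"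
  by (auto simp: chain_step_def stabilises_to_def)

lemma chain_step_add_grain:
  "stable c \<Longrightarrow> i \<in> deficient c \<Longrightarrow> \<mu> i > 0 \<Longrightarrow> chain_step \<mu> tp c (c(i := c i + 1))"
  by (rule chain_stepI) (auto simp: stable_def deficient_def)

lemma chain_steps_to_max_stable:
  fixes c :: "'n::finite \<Rightarrow> nat"
  assumes \<mu>: "\<forall>i. \<mu> i > 0" and "stable c"
  shows "(chain_step \<mu> tp)\<^sup>*\<^sup>* c max_stable"
  using assms(2)
proof (induction "\<Sum>i\<in>UNIV. CARD('n) - 1 - c i" arbitrary: c rule: less_induct)
  case less
  show ?case
  proof (cases "deficient c = {}")
    case True
    then show ?thesis using stable_eq_max_stable less.prems by blast
  next
    case False
    then obtain i where i: "i \<in> deficient c" by blast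
    let ?c = "c(i := c i + 1)"
    have step: "chain_step \<mu> tp c ?c"
      using chain_step_add_grain[OF less.prems i] \<mu> by blast
    have "(\<Sum>j\<in>UNIV. CARD('n) - 1 - ?c j) < (\<Sum>j\<in>UNIV. CARD('n) - 1 - c j)"
      using i by (intro sum_strict_mono_ex1) (auto simp: deficient_def)
    then have "(chain_step \<mu> tp)\<^sup>*\<^sup>* ?c max_stable"
      using less.hyps chain_step_stable[OF step] by blast
    with step show ?thesis by (rule converse_rtranclp_into_rtranclp)
  qed
qed

lemma recurrent_iff_reachable_from_max_stable:
  assumes "\<forall>i. \<mu> i > 0"
  shows "recurrent \<mu> tp c \<longleftrightarrow> stable c \<and> (chain_step \<mu> tp)\<^sup>*\<^sup>* max_stable c"
  using chain_steps_to_max_stable[OF assms] chain_steps_stable rtranclp_trans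
  unfolding recurrent_def by metis

section \<open>The abelian sandpile model\<close>

lemma asm_topple_sum_less:
  fixes x :: "'n::finite \<Rightarrow> nat"
  assumes "asm_topple x v y" shows "sum y UNIV < sum x UNIV"
proof -
  have y: "y = (\<lambda>w. if w = v then x v - CARD('n) else x w + 1)" and xv: "CARD('n) \<le> x v"
    using assms by (auto simp: asm_topple_def)
  have "sum y UNIV = (x v - CARD('n)) + (sum x (UNIV - {v}) + (CARD('n) - 1))"
    by (simp add: y sum.remove[of UNIV v] sum_Suc card_Diff_singleton)
  moreover have "sum x UNIV = x v + sum x (UNIV - {v})"
    by (simp add: sum.remove[of UNIV v])
  moreover have "0 < CARD('n)" by simp
  ultimately show ?thesis using xv by linarith
qed

lemma stable_imp_no_asm_topple: "stable (x :: 'n::finite \<Rightarrow> nat) \<Longrightarrow> \<not> asm_topple x v y"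
proof
  assume "stable x" "asm_topple x v y"
  then have "x v \<le> CARD('n) - 1" "CARD('n) \<le> x v" "0 < CARD('n)"
    by (auto simp: stable_def asm_topple_def)
  then show False by linarith
qed

lemma asm_topple_diamond:
  fixes x :: "'n::finite \<Rightarrow> nat"
  assumes "asm_topple x v y" "asm_topple x w z" "v \<noteq> w"
  shows "\<exists>u. asm_topple y w u \<and> asm_topple z v u"
  using assms
  by (intro exI[of _ "\<lambda>k. if k = v then x v - CARD('n) + 1
                          else if k = w then x w - CARD('n) + 1 else x k + 2"])
     (auto simp: asm_topple_def fun_eq_iff)

lemma strong_confluentp_asm_topple:
  "strong_confluentp (topple_step (asm_topple :: ('n::finite \<Rightarrow> nat) \<Rightarrow> _))"
proof
  fix x y z :: "'n \<Rightarrow> nat"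
  assume "topple_step asm_topple x y" "topple_step asm_topple x z"
  then obtain v w where vw: "asm_topple x v y" "asm_topple x w z" by blast
  show "\<exists>u. (topple_step asm_topple)\<^sup>*\<^sup>* y u \<and> (topple_step asm_topple)\<^sup>=\<^sup>= z u"
  proof (cases "v = w")
    case True
    then show ?thesis using vw by (auto simp: asm_topple_def)
  next
    case False
    then show ?thesis using asm_topple_diamond[OF vw] by blast
  qed
qed

lemma stable_asm_steps_eq: "(topple_step asm_topple)\<^sup>*\<^sup>* x y \<Longrightarrow> stable x \<Longrightarrow> y = x"
  by (induction rule: converse_rtranclp_induct) (auto dest: stable_imp_no_asm_topple)

lemma asm_stabilisation_unique:
  assumes "(topple_step asm_topple)\<^sup>*\<^sup>* x y" "(topple_step asm_topple)\<^sup>*\<^sup>* x z" "stable y" "stable z"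
  shows "y = z"
  using confluentpD[OF strong_confluentp_imp_confluentp[OF strong_confluentp_asm_topple] assms(1,2)]
    stable_asm_steps_eq assms(3,4) by metis

lemma asm_stabilisation_exists:
  fixes x :: "'n::finite \<Rightarrow> nat"
  shows "\<exists>y. (topple_step asm_topple)\<^sup>*\<^sup>* x y \<and> stable y"
proof (induction "sum x UNIV" arbitrary: x rule: less_induct)
  case less
  show ?case
  proof (cases "stable x")
    case False
    then obtain v where "CARD('n) - 1 < x v"
      by (auto simp: stable_def not_le)
    then have "CARD('n) \<le> x v" by linarith
    then have step: "asm_topple x v (\<lambda>w. if w = v then x v - CARD('n) else x w + 1)"
      (is "asm_topple x v ?y") by (simp add: asm_topple_def)
    then obtain y where "(topple_step asm_topple)\<^sup>*\<^sup>* ?y y" "stable y"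
      using less asm_topple_sum_less by blast
    with step show ?thesis by (blast intro: converse_rtranclp_into_rtranclp)
  qed blast
qed

lemma asm_steps_shift:
  "(topple_step asm_topple)\<^sup>*\<^sup>* x y \<Longrightarrow> (topple_step asm_topple)\<^sup>*\<^sup>* (\<lambda>w. x w + g w) (\<lambda>w. y w + g w)"
proof (induction rule: rtranclp_induct)
  case (step y z)
  then have "topple_step asm_topple (\<lambda>w. y w + g w) (\<lambda>w. z w + g w)"
    by (auto simp: asm_topple_def fun_eq_iff)
  then show ?case by (rule rtranclp.rtrancl_into_rtrancl[OF step.IH])
qed simp

text \<open>Dhar's forbidden subconfigurations: on the complete graph a vertex of \<open>A\<close> has
  \<open>card A - 1\<close> neighbours in \<open>A\<close>.\<close>

definition no_forbidden_subconfig :: "('n::finite \<Rightarrow> nat) \<Rightarrow> bool" where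
  "no_forbidden_subconfig c \<longleftrightarrow> (\<forall>A. A \<noteq> {} \<longrightarrow> (\<exists>i\<in>A. card A \<le> c i + 1))"

text \<open>Dhar's burning algorithm: starting from \<open>c + 1\<close> every vertex topples exactly once;
  \<open>burnt D\<close> is the configuration after the vertices of \<open>D\<close> have toppled, and the absence of
  forbidden subconfigurations provides the next vertex able to topple.\<close>

lemma asm_steps_burning:
  fixes c :: "'n::finite \<Rightarrow> nat"
  assumes "no_forbidden_subconfig c"
  shows "(topple_step asm_topple)\<^sup>*\<^sup>* (\<lambda>w. c w + 1) c"
proof -
  define burnt where
    "burnt D = (\<lambda>w. if w \<in> D then c w + card D - CARD('n) else c w + 1 + card D)" for D :: "'n set"
  have "\<exists>D. card D = k \<and> (\<forall>w\<in>D. CARD('n) \<le> c w + k) \<and>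
          (topple_step asm_topple)\<^sup>*\<^sup>* (\<lambda>w. c w + 1) (burnt D)"
    if "k \<le> CARD('n)" for k
    using that
  proof (induction k)
    case 0
    then show ?case by (intro exI[of _ "{}"]) (simp add: burnt_def)
  next
    case (Suc k)
    then obtain D where D: "card D = k" "\<forall>w\<in>D. CARD('n) \<le> c w + k"
      "(topple_step asm_topple)\<^sup>*\<^sup>* (\<lambda>w. c w + 1) (burnt D)"
      by auto
    have card_rest: "card (UNIV - D) = CARD('n) - k"
      using D(1) by (simp add: card_Diff_subset)
    then have "UNIV - D \<noteq> {}"
      using Suc.prems by (metis card.empty diff_is_0_eq not_less_eq_eq)
    then obtain i where i: "i \<notin> D" "card (UNIV - D) \<le> c i + 1"
      using assms[unfolded no_forbidden_subconfig_def, rule_format] by (meson DiffD2)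
    have ci: "CARD('n) \<le> c i + Suc k"
      using i(2) card_rest Suc.prems by linarith
    have "asm_topple (burnt D) i (burnt (insert i D))"
      using D(1,2) i(1) ci by (auto simp: asm_topple_def burnt_def fun_eq_iff)
    then have "(topple_step asm_topple)\<^sup>*\<^sup>* (\<lambda>w. c w + 1) (burnt (insert i D))"
      using rtranclp.rtrancl_into_rtrancl[OF D(3)] by blast
    then show ?case
      using D(1,2) ci i(1) by (intro exI[of _ "insert i D"]) auto
  qed
  from this[of "CARD('n)"] obtain D where
    "card D = CARD('n)" "(topple_step asm_topple)\<^sup>*\<^sup>* (\<lambda>w. c w + 1) (burnt D)"
    by auto
  moreover from this have "D = UNIV" by (simp add: card_eq_UNIV_imp_eq_UNIV)
  ultimately show ?thesis by (simp add: burnt_def)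
qed

lemma asm_steps_burning_iterated:
  fixes c :: "'n::finite \<Rightarrow> nat"
  assumes "no_forbidden_subconfig c"
  shows "(topple_step asm_topple)\<^sup>*\<^sup>* (\<lambda>w. c w + k) c"
proof (induction k)
  case (Suc k)
  have "(topple_step asm_topple)\<^sup>*\<^sup>* (\<lambda>w. c w + Suc k) (\<lambda>w. c w + k)"
    using asm_steps_shift[OF asm_steps_burning[OF assms], of "\<lambda>_. k"] by simp
  then show ?case
    using Suc.IH by (rule rtranclp_trans)
qed simp

lemma chain_steps_asm_add:
  fixes x :: "'n::finite \<Rightarrow> nat"
  assumes \<mu>: "\<forall>i. \<mu> i > 0" and "stable x"
  shows "\<exists>y. stable y \<and> (chain_step \<mu> asm_topple)\<^sup>*\<^sup>* x y \<and>
             (topple_step asm_topple)\<^sup>*\<^sup>* (\<lambda>w. x w + g w) y"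
proof (induction "sum g UNIV" arbitrary: g)
  case 0
  then show ?case using \<open>stable x\<close> by (intro exI[of _ x]) simp
next
  case (Suc k)
  then obtain i where "g i > 0" by (metis gr0I sum.neutral nat.distinct(1))
  define g' where "g' = g(i := g i - 1)"
  have g: "g = (\<lambda>w. g' w + (if w = i then 1 else 0))"
    using \<open>g i > 0\<close> by (auto simp: g'_def)
  then have "sum g' UNIV = k"
    using Suc.hyps(2) by (simp add: sum.distrib)
  then obtain y' where y': "stable y'" "(chain_step \<mu> asm_topple)\<^sup>*\<^sup>* x y'"
    "(topple_step asm_topple)\<^sup>*\<^sup>* (\<lambda>w. x w + g' w) y'"
    using Suc.hyps(1) by blast
  obtain y where y: "(topple_step asm_topple)\<^sup>*\<^sup>* (y'(i := y' i + 1)) y" "stable y"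
    using asm_stabilisation_exists by blast
  have "chain_step \<mu> asm_topple y' y"
    using y y' \<mu> by (intro chain_stepI) auto
  then have "(chain_step \<mu> asm_topple)\<^sup>*\<^sup>* x y"
    by (rule rtranclp.rtrancl_into_rtrancl[OF y'(2)])
  moreover have "(\<lambda>w. y' w + (if w = i then 1 else 0)) = y'(i := y' i + 1)"
    by auto
  then have "(topple_step asm_topple)\<^sup>*\<^sup>* (\<lambda>w. x w + g w) (y'(i := y' i + 1))"
    using asm_steps_shift[OF y'(3), of "\<lambda>w. if w = i then 1 else 0"]
    by (simp add: g add.assoc)
  then have "(topple_step asm_topple)\<^sup>*\<^sup>* (\<lambda>w. x w + g w) y"
    using y(1) by (rule rtranclp_trans)
  ultimately show ?case
    using y(2) by (intro exI[of _ y]) simp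
qed

lemma chain_steps_asm_from_max_stable:
  fixes c :: "'n::finite \<Rightarrow> nat"
  assumes "\<forall>i. \<mu> i > 0" "no_forbidden_subconfig c" "stable c"
  shows "(chain_step \<mu> asm_topple)\<^sup>*\<^sup>* max_stable c"
proof -
  obtain y where y: "stable y" "(chain_step \<mu> asm_topple)\<^sup>*\<^sup>* max_stable y"
    "(topple_step asm_topple)\<^sup>*\<^sup>* (\<lambda>w. max_stable w + c w) y"
    using chain_steps_asm_add[OF assms(1) stable_max_stable] by blast
  have "(topple_step asm_topple)\<^sup>*\<^sup>* (\<lambda>w. max_stable w + c w) c"
    using asm_steps_burning_iterated[OF assms(2), of "CARD('n) - 1"]
    by (simp add: max_stable_def add.commute)
  then have "y = c"
    using asm_stabilisation_unique y(1,3) assms(3) by blast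
  with y(2) show ?thesis by simp
qed

lemma DR_if_no_forbidden_subconfig:
  assumes "\<forall>i. \<mu> i > 0" "no_forbidden_subconfig c" "stable c"
  shows "DR \<mu> c"
  using assms chain_steps_asm_from_max_stable
  unfolding DR_def recurrent_iff_reachable_from_max_stable[OF assms(1)] by blast

section \<open>The subset-sum bound for the stochastic model\<close>

definition subset_sums_ge_choose2 :: "('n::finite \<Rightarrow> nat) \<Rightarrow> bool" where
  "subset_sums_ge_choose2 c \<longleftrightarrow> (\<forall>A. card A choose 2 \<le> sum c A)"

lemma double_choose_two: "2 * (k choose 2) = k * (k - 1)"
proof -
  have "even (k * (k - 1))" by (cases "even k") auto
  then show ?thesis by (simp add: choose_two)
qed

lemma Suc_choose_two: "Suc k choose 2 = k + (k choose 2)"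
  by (simp add: numeral_2_eq_2)

lemma subset_sums_ge_choose2_int_iff:
  "subset_sums_ge_choose2 c \<longleftrightarrow> (\<forall>A. int (card A) * (int (card A) - 1) \<le> 2 * int (sum c A))"
proof -
  have "int k * (int k - 1) = int (2 * (k choose 2))" for k
    unfolding double_choose_two by (cases k) (simp_all add: algebra_simps)
  then show ?thesis
    unfolding subset_sums_ge_choose2_def
    by (metis (no_types) of_nat_le_iff nat_mult_le_cancel1 zero_less_numeral of_nat_mult of_nat_numeral)
qed

lemma subset_sums_ge_choose2_mono:
  "subset_sums_ge_choose2 c \<Longrightarrow> (\<And>w. c w \<le> d w) \<Longrightarrow> subset_sums_ge_choose2 d"
  unfolding subset_sums_ge_choose2_def by (meson le_trans sum_mono)

lemma subset_sums_ge_choose2_max_stable: "subset_sums_ge_choose2 (max_stable :: 'n::finite \<Rightarrow> nat)"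
  unfolding subset_sums_ge_choose2_def
proof
  fix A :: "'n set"
  have "card A choose 2 \<le> card A * (card A - 1)"
    by (simp add: choose_two)
  also have "\<dots> \<le> card A * (CARD('n) - 1)"
    by (intro mult_le_mono2 diff_le_mono) (simp add: card_mono)
  finally show "card A choose 2 \<le> sum max_stable A"
    by (simp add: max_stable_def)
qed

lemma card_nbrs: "card (nbrs (v::'n::finite)) = CARD('n)"
proof -
  have "card (Some ` (UNIV - {v})) = CARD('n) - 1"
    by (simp add: card_image card_Diff_singleton)
  then show ?thesis
    by (simp add: nbrs_def Suc_diff_1)
qed

text \<open>At most \<open>n - |B|\<close> of the grains sent by \<open>v\<close> leave \<open>B\<close>.\<close>

lemma card_subset_nbrs_le:
  fixes v :: "'n::finite"
  assumes "S \<subseteq> nbrs v" "v \<notin> B"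
  shows "card S + card B \<le> card {w \<in> B. Some w \<in> S} + CARD('n)"
proof -
  define K where "K = {w \<in> B. Some w \<in> S}"
  have "card S \<le> card (Some ` K \<union> (nbrs v - Some ` B))"
    using assms(1) by (intro card_mono) (auto simp: K_def)
  also have "\<dots> \<le> card (Some ` K) + card (nbrs v - Some ` B)"
    by (rule card_Un_le)
  also have "card (Some ` K) = card K"
    by (simp add: card_image)
  also have "card (nbrs v - Some ` B) = CARD('n) - card B"
    using assms(2) by (subst card_Diff_subset) (auto simp: nbrs_def card_nbrs card_image)
  finally have "card S \<le> card K + (CARD('n) - card B)" .
  moreover have "card B \<le> CARD('n)"
    by (simp add: card_mono)
  ultimately show ?thesis
    by (simp add: K_def)
qed

lemma ssm_topple_preserves_subset_sums:
  fixes x :: "'n::finite \<Rightarrow> nat"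
  assumes x: "subset_sums_ge_choose2 x" and "ssm_topple p x v y"
  shows "subset_sums_ge_choose2 y"
  unfolding subset_sums_ge_choose2_def
proof
  fix A :: "'n set"
  obtain S where S: "S \<subseteq> nbrs v" and xv: "CARD('n) \<le> x v"
    and y: "y = (\<lambda>w. if w = v then x v - card S else if Some w \<in> S then x w + 1 else x w)"
    using assms(2) unfolding ssm_topple_def by blast
  show "card A choose 2 \<le> sum y A"
  proof (cases "v \<in> A")
    case False
    then have "sum x A \<le> sum y A"
      by (intro sum_mono) (auto simp: y)
    then show ?thesis
      using x unfolding subset_sums_ge_choose2_def by (meson le_trans)
  next
    case True
    define B where "B = A - {v}"
    define K where "K = {w \<in> B. Some w \<in> S}"
    have card_A: "card A = Suc (card B)"
      using True by (metis B_def card_Suc_Diff1 finite)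
    have "sum y B = (\<Sum>w\<in>B. x w + (if Some w \<in> S then 1 else 0))"
      by (rule sum.cong) (auto simp: y B_def)
    also have "\<dots> = sum x B + card K"
      by (simp add: K_def sum.distrib sum.If_cases[of B] Int_def)
    finally have "sum y A = x v - card S + sum x B + card K"
      using True by (simp add: B_def sum.remove y)
    then have "card B + sum x B \<le> sum y A"
      using card_subset_nbrs_le[OF S, of B] xv by (simp add: B_def K_def)
    moreover have "card B choose 2 \<le> sum x B"
      using x unfolding subset_sums_ge_choose2_def by blast
    ultimately show ?thesis
      by (simp add: card_A Suc_choose_two)
  qed
qed

lemma chain_steps_ssm_preserve_subset_sums:
  assumes "(chain_step \<mu> (ssm_topple p))\<^sup>*\<^sup>* max_stable c"
  shows "subset_sums_ge_choose2 c"
  using assms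
proof (induction rule: rtranclp_induct)
  case base
  then show ?case by (rule subset_sums_ge_choose2_max_stable)
next
  case (step y z)
  then obtain i where i: "(topple_step (ssm_topple p))\<^sup>*\<^sup>* (y(i := y i + 1)) z"
    unfolding chain_step_def stabilises_to_def by blast
  have "subset_sums_ge_choose2 (y(i := y i + 1))"
    using step.IH by (rule subset_sums_ge_choose2_mono) simp
  with i show ?case
    by (induction rule: rtranclp_induct) (auto intro: ssm_topple_preserves_subset_sums)
qed

lemma asm_topple_imp_ssm_topple:
  fixes x :: "'n::finite \<Rightarrow> nat"
  assumes "0 < p" "asm_topple x v y"
  shows "ssm_topple p x v y"
proof -
  have "y = (\<lambda>w. if w = v then x v - card (nbrs v) else if Some w \<in> nbrs v then x w + 1 else x w)"
    using assms(2) unfolding card_nbrs by (auto simp: asm_topple_def nbrs_def fun_eq_iff)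
  then show ?thesis
    using assms by (auto simp: ssm_topple_def asm_topple_def card_nbrs)
qed

lemma chain_steps_asm_imp_ssm:
  assumes "0 < p" "(chain_step \<mu> asm_topple)\<^sup>*\<^sup>* c d"
  shows "(chain_step \<mu> (ssm_topple p))\<^sup>*\<^sup>* c d"
proof -
  have "topple_step asm_topple x y \<Longrightarrow> topple_step (ssm_topple p) x y" for x y
    using asm_topple_imp_ssm_topple[OF assms(1)] by blast
  then have "(topple_step asm_topple)\<^sup>*\<^sup>* x y \<Longrightarrow> (topple_step (ssm_topple p))\<^sup>*\<^sup>* x y" for x y
    by (rule mono_rtranclp[rule_format])
  then have "chain_step \<mu> asm_topple x y \<Longrightarrow> chain_step \<mu> (ssm_topple p) x y" for x y
    unfolding chain_step_def stabilises_to_def by blast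
  then show ?thesis
    using assms(2) by (rule mono_rtranclp[rule_format])
qed

lemma DR_imp_SR:
  assumes "0 < p" "\<forall>i. \<mu> i > 0" "DR \<mu> c"
  shows "SR p \<mu> c"
  using assms chain_steps_asm_imp_ssm
  unfolding DR_def SR_def recurrent_iff_reachable_from_max_stable[OF assms(2)] by blast

section \<open>Predecessors in the stochastic model\<close>

lemma exists_top_subset:
  fixes f :: "'a \<Rightarrow> 'b::linorder"
  assumes "finite X" "k \<le> card X"
  shows "\<exists>Z\<subseteq>X. card Z = k \<and> (\<forall>z\<in>Z. \<forall>w\<in>X - Z. f w \<le> f z)"
  using assms(2)
proof (induction k)
  case 0
  show ?case by (intro exI[of _ "{}"]) auto
next
  case (Suc k)
  then obtain Z where Z: "Z \<subseteq> X" "card Z = k" "\<forall>z\<in>Z. \<forall>w\<in>X - Z. f w \<le> f z"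
    by auto
  have "card (X - Z) \<noteq> 0"
    using Z Suc.prems assms(1) by (simp add: card_Diff_subset finite_subset)
  then have "X - Z \<noteq> {}" by (metis card.empty)
  then have "Max (f ` (X - Z)) \<in> f ` (X - Z)"
    using assms(1) by simp
  then obtain m where m: "m \<in> X - Z" "f m = Max (f ` (X - Z))"
    by (rule imageE) simp
  then have m_max: "\<forall>w\<in>X - Z. f w \<le> f m"
    using assms(1) by simp
  have "card (insert m Z) = Suc k"
    using m Z assms(1) finite_subset by fastforce
  then show ?case
    using m m_max Z by (intro exI[of _ "insert m Z"]) auto
qed

text \<open>The arithmetic core of the margin estimate below, with \<open>k = |A \<inter> Z|\<close>,
  \<open>w = |A \<inter> W|\<close>, \<open>g = |W - A|\<close>, \<open>\<mu>\<close> separating the values of \<open>c\<close> on \<open>Z\<close> from those on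
  \<open>W\<close>, and \<open>\<alpha>\<close>, \<open>\<beta>\<close>, \<open>\<gamma>\<close> the sums of \<open>c\<close> over \<open>A \<inter> Z\<close>, \<open>A \<inter> W\<close>, \<open>W - A\<close>. The last
  hypothesis is the bound for \<open>{v} \<union> (A \<inter> Z) \<union> W\<close>.\<close>

lemma top_margin_arith:
  fixes k w g \<mu> \<alpha> \<beta> \<gamma> :: int
  assumes k: "1 \<le> k" and w: "0 \<le> w" and g: "0 \<le> g"
    and \<alpha>: "k * \<mu> \<le> \<alpha>" and \<beta>: "w * (w - 1) \<le> 2 * \<beta>" and \<gamma>: "\<gamma> \<le> g * \<mu>"
    and B: "(k + w + g + 1) * (k + w + g) \<le> 2 * (\<alpha> + \<beta> + \<gamma> + w + g)"
  shows "(k + w) * (k + w - 1) + 2 * k \<le> 2 * (\<alpha> + \<beta>)"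
proof (cases "2 * w + k + 1 \<le> 2 * \<mu>")
  case True
  have "(k + w) * (k + w - 1) + 2 * k = k * (2 * w + k + 1) + w * (w - 1)"
    by (simp add: algebra_simps)
  also have "\<dots> \<le> k * (2 * \<mu>) + 2 * \<beta>"
    using True k \<beta> by (intro add_mono mult_left_mono) auto
  also have "\<dots> \<le> 2 * (\<alpha> + \<beta>)"
    using \<alpha> by simp
  finally show ?thesis .
next
  case False
  have "(k + w) * (k + w - 1) + 2 * k \<le> (k + w) * (k + w - 1) + 2 * k + g * (k + g - 1)"
    using g k by simp
  also have "\<dots> = (k + w + g + 1) * (k + w + g) - 2 * (w + g) - g * (2 * w + k)"
    by (simp add: algebra_simps)
  also have "\<dots> \<le> (k + w + g + 1) * (k + w + g) - 2 * (w + g) - g * (2 * \<mu>)"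
    using False g by (simp add: mult_left_mono)
  also have "\<dots> \<le> 2 * (\<alpha> + \<beta>)"
    using B \<gamma> by simp
  finally show ?thesis .
qed

lemma subset_sums_top_margin:
  fixes c :: "'n::finite \<Rightarrow> nat"
  assumes sums: "subset_sums_ge_choose2 c"
    and v: "v \<notin> Z \<union> W" and ZW: "Z \<inter> W = {}" and card_W: "card W = c v"
    and top: "\<forall>z\<in>Z. \<forall>w\<in>W. c w \<le> c z"
    and A: "A \<subseteq> Z \<union> W" "A \<inter> Z \<noteq> {}"
  shows "int (card A) * (int (card A) - 1) + 2 * int (card (A \<inter> Z)) \<le> 2 * int (sum c A)"
proof -
  define AZ AW where "AZ = A \<inter> Z" and "AW = A \<inter> W"
  define \<mu> where "\<mu> = Min (c ` AZ)"
  have "\<mu> \<in> c ` AZ"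
    unfolding \<mu>_def using A(2) by (intro Min_in) (auto simp: AZ_def)
  then obtain z0 where "z0 \<in> AZ" "c z0 = \<mu>" by blast
  then have \<mu>_W: "\<forall>w\<in>W. c w \<le> \<mu>"
    using top by (auto simp: AZ_def)
  have A_split: "AZ \<union> AW = A" "AZ \<inter> AW = {}"
    using A ZW by (auto simp: AZ_def AW_def)
  have W_split: "AW \<union> (W - AW) = W" "AW \<inter> (W - AW) = {}"
    by (auto simp: AW_def)
  have \<alpha>: "int (card AZ) * int \<mu> \<le> int (sum c AZ)"
    using sum_bounded_below[of AZ \<mu> c] by (simp add: \<mu>_def flip: of_nat_mult of_nat_sum)
  have \<gamma>: "int (sum c (W - AW)) \<le> int (card (W - AW)) * int \<mu>"
    using sum_bounded_above[of "W - AW" c \<mu>] \<mu>_W by (simp flip: of_nat_mult of_nat_sum)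
  have \<beta>: "int (card AW) * (int (card AW) - 1) \<le> 2 * int (sum c AW)"
    using sums by (simp add: subset_sums_ge_choose2_int_iff)
  have AZ_W: "AZ \<inter> W = {}" "v \<notin> AZ \<union> W"
    using ZW v by (auto simp: AZ_def)
  have "c v = card AW + card (W - AW)"
    using card_W card_Un_disjoint[of AW "W - AW"] W_split by simp
  moreover have "card (insert v (AZ \<union> W)) = card AZ + c v + 1"
    using AZ_W card_W by (simp add: card_Un_disjoint)
  moreover have "sum c (insert v (AZ \<union> W)) = c v + sum c AZ + sum c AW + sum c (W - AW)"
    using AZ_W W_split sum.union_disjoint[of AW "W - AW" c] by (simp add: sum.union_disjoint)
  ultimately have B: "(int (card AZ) + int (card AW) + int (card (W - AW)) + 1)
      * (int (card AZ) + int (card AW) + int (card (W - AW)))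
      \<le> 2 * (int (sum c AZ) + int (sum c AW) + int (sum c (W - AW)) + int (card AW) + int (card (W - AW)))"
    using sums[unfolded subset_sums_ge_choose2_int_iff, rule_format, of "insert v (AZ \<union> W)"]
    by (simp add: algebra_simps)
  have "card A = card AZ + card AW" "sum c A = sum c AZ + sum c AW"
    using A_split card_Un_disjoint[of AZ AW] sum.union_disjoint[of AZ AW c] by simp_all
  moreover have "1 \<le> card AZ"
    using A(2) by (simp add: AZ_def Suc_le_eq card_gt_0_iff)
  ultimately show ?thesis
    using top_margin_arith[OF _ _ _ \<alpha> \<beta> \<gamma> B] by (simp add: AZ_def)
qed

lemma margin_add_full_vertices:
  fixes c :: "'n::finite \<Rightarrow> nat" and m :: int
  assumes F: "\<forall>w\<in>F. c w = CARD('n) - 1" "A \<inter> F = {}"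
    and A: "int (card A) * (int (card A) - 1) + m \<le> 2 * int (sum c A)"
  shows "int (card (A \<union> F)) * (int (card (A \<union> F)) - 1) + m \<le> 2 * int (sum c (A \<union> F))"
proof -
  define a h n where "a = int (card A)" and "h = int (card F)" and "n = int CARD('n)"
  have "card (A \<union> F) \<le> CARD('n)"
    by (rule card_mono) auto
  then have card: "int (card (A \<union> F)) = a + h" "a + h \<le> n"
    using F(2) by (simp_all add: card_Un_disjoint a_def h_def n_def)
  have "int (sum c (A \<union> F)) = int (sum c A) + h * (n - 1)"
    using F by (simp add: sum.union_disjoint h_def n_def of_nat_diff)
  moreover have "h * (2 * a + h - 1) \<le> h * (2 * (n - 1))"
  proof (cases "h = 0")
    case False
    then have "1 \<le> h" by (simp add: h_def card_gt_0_iff Suc_le_eq)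
    then show ?thesis
      using card(2) by (intro mult_left_mono) auto
  qed simp
  moreover have "(a + h) * (a + h - 1) = a * (a - 1) + h * (2 * a + h - 1)"
    by (simp add: algebra_simps)
  ultimately show ?thesis
    using A card(1) by (simp add: a_def algebra_simps)
qed

text \<open>The margin \<open>2 |A \<inter> Z|\<close> is what allows the predecessor to remove one grain from each
  vertex of \<open>Z\<close>.\<close>

lemma subset_sums_margin:
  fixes c :: "'n::finite \<Rightarrow> nat"
  assumes sums: "subset_sums_ge_choose2 c" and "stable c"
    and Z: "Z \<subseteq> deficient c - {v}" "card Z = card (deficient c) - 1 - c v"
    and top: "\<forall>z\<in>Z. \<forall>w\<in>deficient c - {v} - Z. c w \<le> c z"
    and "v \<in> deficient c" "v \<notin> A"
  shows "int (card A) * (int (card A) - 1) + 2 * int (card (A \<inter> Z)) \<le> 2 * int (sum c A)"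
proof (cases "A \<inter> Z = {}")
  case True
  then show ?thesis
    using sums by (simp add: subset_sums_ge_choose2_int_iff)
next
  case False
  define R W where "R = deficient c" and "W = deficient c - {v} - Z"
  have "card (R - {v}) = card Z + card W"
    using Z(1) card_Un_disjoint[of Z W] by (simp add: R_def W_def Un_absorb1 Un_Diff_cancel)
  moreover have "card (R - {v}) = card R - 1"
    using \<open>v \<in> deficient c\<close> by (simp add: R_def)
  moreover have "card Z \<noteq> 0"
    using False by auto
  ultimately have "card W = c v"
    using Z(2) by (simp add: R_def)
  moreover have "A \<inter> R \<inter> Z = A \<inter> Z"
    using Z(1) by (auto simp: R_def)
  ultimately have margin: "int (card (A \<inter> R)) * (int (card (A \<inter> R)) - 1) + 2 * int (card (A \<inter> Z))
      \<le> 2 * int (sum c (A \<inter> R))"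
    using subset_sums_top_margin[OF sums, of v Z W "A \<inter> R"] False Z(1) top \<open>v \<notin> A\<close>
    by (auto simp: R_def W_def)
  have full: "\<forall>w\<in>A - R. c w = CARD('n) - 1"
    using \<open>stable c\<close> by (auto simp: R_def deficient_def stable_def intro: antisym)
  have "A \<inter> R \<inter> (A - R) = {}" "A \<inter> R \<union> (A - R) = A"
    by auto
  then show ?thesis
    using margin_add_full_vertices[OF full _ margin] by simp
qed

definition predecessor :: "('n::finite \<Rightarrow> nat) \<Rightarrow> 'n \<Rightarrow> 'n set \<Rightarrow> 'n \<Rightarrow> nat" where
  "predecessor c v Z = (\<lambda>w. if w = v then CARD('n) - 1 else if w \<in> Z then c w - 1 else c w)"

lemma stable_predecessor:
  fixes c :: "'n::finite \<Rightarrow> nat"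
  assumes "stable c"
  shows "stable (predecessor c v Z)"
  unfolding stable_def
proof
  fix w
  have "c w \<le> CARD('n) - 1"
    using assms by (simp add: stable_def)
  then show "predecessor c v Z w \<le> CARD('n) - 1"
    by (simp add: predecessor_def le_trans[OF diff_le_self])
qed

lemma deficient_predecessor: "deficient (predecessor c v Z) \<subseteq> deficient c \<union> Z - {v}"
  by (auto simp: deficient_def predecessor_def)

lemma subset_sums_predecessor:
  fixes c :: "'n::finite \<Rightarrow> nat"
  assumes sums: "subset_sums_ge_choose2 c"
    and Z: "v \<notin> Z" "\<forall>z\<in>Z. 1 \<le> c z" "c v + card Z \<le> CARD('n) - 1"
    and margin: "\<And>A. v \<notin> A \<Longrightarrow>
      int (card A) * (int (card A) - 1) + 2 * int (card (A \<inter> Z)) \<le> 2 * int (sum c A)"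
  shows "subset_sums_ge_choose2 (predecessor c v Z)"
  unfolding subset_sums_ge_choose2_int_iff
proof
  fix A :: "'n set"
  let ?d = "predecessor c v Z"
  have "sum ?d A + card (A \<inter> Z) = (\<Sum>w\<in>A. ?d w + (if w \<in> Z then 1 else 0))"
    by (simp add: sum.distrib sum.If_cases Int_commute)
  also have "\<dots> = (\<Sum>w\<in>A. if w = v then CARD('n) - 1 else c w)"
    using Z by (intro sum.cong) (auto simp: predecessor_def)
  finally have sum_d: "sum ?d A + card (A \<inter> Z) = (\<Sum>w\<in>A. if w = v then CARD('n) - 1 else c w)" .
  show "int (card A) * (int (card A) - 1) \<le> 2 * int (sum ?d A)"
  proof (cases "v \<in> A")
    case True
    have "sum c A = c v + sum c (A - {v})"
      using True by (simp add: sum.remove)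
    moreover have "(\<Sum>w\<in>A. if w = v then CARD('n) - 1 else c w) = (CARD('n) - 1) + sum c (A - {v})"
      using True by (simp add: sum.remove)
    moreover have "card (A \<inter> Z) \<le> card Z"
      by (simp add: card_mono)
    ultimately have "sum c A \<le> sum ?d A"
      using sum_d Z(3) by linarith
    then have "int (sum c A) \<le> int (sum ?d A)"
      by (simp only: of_nat_le_iff)
    then show ?thesis
      using sums[unfolded subset_sums_ge_choose2_int_iff, rule_format, of A] by linarith
  next
    case False
    then have "(\<Sum>w\<in>A. if w = v then CARD('n) - 1 else c w) = sum c A"
      by (intro sum.cong) auto
    then have "sum c A = sum ?d A + card (A \<inter> Z)"
      using sum_d by linarith
    then have "int (sum c A) = int (sum ?d A) + int (card (A \<inter> Z))"
      by (simp only: of_nat_add[symmetric])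
    then show ?thesis
      using margin[OF False] by linarith
  qed
qed

lemma ssm_toppleI:
  fixes x :: "'n::finite \<Rightarrow> nat"
  assumes "0 < p" "p < 1" "S \<subseteq> nbrs v" "CARD('n) \<le> x v"
  shows "ssm_topple p x v (\<lambda>w. if w = v then x v - card S else if Some w \<in> S then x w + 1 else x w)"
  using assms unfolding ssm_topple_def by auto

text \<open>Each vertex of \<open>Y\<close> topples sending a single grain, to the sink.\<close>

lemma ssm_steps_drain:
  fixes x :: "'n::finite \<Rightarrow> nat"
  assumes "0 < p" "p < 1" "\<forall>y\<in>Y. x y = CARD('n)"
  shows "(topple_step (ssm_topple p))\<^sup>*\<^sup>* x (\<lambda>w. if w \<in> Y then CARD('n) - 1 else x w)"
proof -
  have "finite Y" by simp
  then show ?thesis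
    using assms(3)
  proof (induction Y rule: finite_induct)
    case (insert y Y)
    let ?x = "\<lambda>w. if w \<in> Y then CARD('n) - 1 else x w"
    have "ssm_topple p ?x y (\<lambda>w. if w \<in> insert y Y then CARD('n) - 1 else x w)"
      unfolding ssm_topple_def using insert assms(1,2)
      by (intro conjI exI[of _ "{None}"]) (auto simp: nbrs_def fun_eq_iff)
    then have "topple_step (ssm_topple p) ?x (\<lambda>w. if w \<in> insert y Y then CARD('n) - 1 else x w)"
      by blast
    with insert show ?case
      by (simp add: rtranclp.rtrancl_into_rtrancl)
  qed simp
qed

text \<open>Adding a grain at \<open>v\<close> to the predecessor, \<open>v\<close> topples onto the sink, \<open>Y\<close> and \<open>Z\<close>;
  then the full vertices in \<open>Y\<close> drain to the sink.\<close>

lemma chain_step_predecessor: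
  fixes c :: "'n::finite \<Rightarrow> nat"
  assumes p: "0 < p" "p < 1" and "\<mu> v > 0" and "stable c"
    and Y: "\<forall>y\<in>Y. c y = CARD('n) - 1" and Z: "\<forall>z\<in>Z. 1 \<le> c z"
    and disj: "v \<notin> Y \<union> Z" "Y \<inter> Z = {}"
    and card: "c v + card Y + card Z + 1 = CARD('n)"
  shows "chain_step \<mu> (ssm_topple p) (predecessor c v Z) c"
proof -
  define d where "d = predecessor c v Z"
  define S where "S = insert None (Some ` (Y \<union> Z))"
  define x where "x = d(v := d v + 1)"
  define e where "e = (\<lambda>w. if w = v then x v - card S else if Some w \<in> S then x w + 1 else x w)"
  have "card S = CARD('n) - c v"
    using card disj by (simp add: S_def card_image card_Un_disjoint image_iff)
  moreover have "x v = CARD('n)"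
    using card by (simp add: x_def d_def predecessor_def)
  ultimately have "ssm_topple p x v e"
    unfolding e_def using disj by (intro ssm_toppleI[OF p]) (auto simp: S_def nbrs_def)
  moreover have "\<forall>y\<in>Y. e y = CARD('n)"
    using Y disj card by (auto simp: e_def x_def d_def S_def predecessor_def)
  then have "(topple_step (ssm_topple p))\<^sup>*\<^sup>* e (\<lambda>w. if w \<in> Y then CARD('n) - 1 else e w)"
    by (rule ssm_steps_drain[OF p])
  moreover have "(\<lambda>w. if w \<in> Y then CARD('n) - 1 else e w) = c"
    using Y Z disj \<open>x v = CARD('n)\<close> \<open>card S = CARD('n) - c v\<close> card
    by (auto simp: fun_eq_iff e_def x_def d_def S_def predecessor_def)
  ultimately have "(topple_step (ssm_topple p))\<^sup>*\<^sup>* x c"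
    by (auto intro: converse_rtranclp_into_rtranclp)
  then show ?thesis
    unfolding x_def d_def
    using assms stable_predecessor by (intro chain_stepI) auto
qed

lemma exists_lowering_set:
  fixes c :: "'n::finite \<Rightarrow> nat"
  assumes sums: "subset_sums_ge_choose2 c" and "stable c" and v: "v \<in> deficient c"
  obtains Z where "Z \<subseteq> deficient c - {v}" "card (deficient c) \<le> c v + card Z + 1"
    "c v + card Z \<le> CARD('n) - 1" "\<forall>z\<in>Z. 1 \<le> c z"
    "\<And>A. v \<notin> A \<Longrightarrow>
      int (card A) * (int (card A) - 1) + 2 * int (card (A \<inter> Z)) \<le> 2 * int (sum c A)"
proof -
  define R where "R = deficient c"
  have "card R - 1 - c v \<le> card (R - {v})"
    using v by (simp add: R_def)
  then obtain Z where Z: "Z \<subseteq> R - {v}" "card Z = card R - 1 - c v"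
    "\<forall>z\<in>Z. \<forall>w\<in>R - {v} - Z. c w \<le> c z"
    using exists_top_subset[of "R - {v}" "card R - 1 - c v" c] by auto
  have margin: "int (card A) * (int (card A) - 1) + 2 * int (card (A \<inter> Z)) \<le> 2 * int (sum c A)"
    if "v \<notin> A" for A
    using subset_sums_margin[OF sums \<open>stable c\<close>] Z v that by (simp add: R_def)
  have "\<forall>z\<in>Z. 1 \<le> c z"
  proof
    fix z assume "z \<in> Z"
    then show "1 \<le> c z"
      using margin[of "{z}"] Z(1) by auto
  qed
  moreover have "c v < CARD('n) - 1" "card R \<le> CARD('n)"
    using v by (simp_all add: R_def deficient_def card_mono)
  ultimately show ?thesis
    using that[of Z] Z(1,2) margin by (simp add: R_def)
qed

lemma exists_predecessor:
  fixes c :: "'n::finite \<Rightarrow> nat"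
  assumes p: "0 < p" "p < 1" and \<mu>: "\<forall>i. \<mu> i > 0"
    and sums: "subset_sums_ge_choose2 c" and "stable c" and "deficient c \<noteq> {}"
  obtains d where "stable d" "subset_sums_ge_choose2 d" "card (deficient d) < card (deficient c)"
    "chain_step \<mu> (ssm_topple p) d c"
proof -
  obtain v where v: "v \<in> deficient c"
    using assms(6) by blast
  obtain Z where Z: "Z \<subseteq> deficient c - {v}" "card (deficient c) \<le> c v + card Z + 1"
    "c v + card Z \<le> CARD('n) - 1" "\<forall>z\<in>Z. 1 \<le> c z"
    and margin: "\<And>A. v \<notin> A \<Longrightarrow>
      int (card A) * (int (card A) - 1) + 2 * int (card (A \<inter> Z)) \<le> 2 * int (sum c A)"
    using exists_lowering_set[OF sums \<open>stable c\<close> v] by blast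
  have "CARD('n) - 1 - c v - card Z \<le> card (UNIV - deficient c)"
    using Z(2) by (simp add: card_Diff_subset)
  then obtain Y where Y: "Y \<subseteq> UNIV - deficient c" "card Y = CARD('n) - 1 - c v - card Z"
    by (metis obtain_subset_with_card_n)
  have "0 < CARD('n)" by simp
  then have card_YZ: "c v + card Y + card Z + 1 = CARD('n)"
    using Y(2) Z(3) by linarith
  have Y_full: "\<forall>y\<in>Y. c y = CARD('n) - 1"
  proof
    fix y assume "y \<in> Y"
    then have "\<not> c y < CARD('n) - 1" "c y \<le> CARD('n) - 1"
      using Y(1) \<open>stable c\<close> by (auto simp: deficient_def stable_def)
    then show "c y = CARD('n) - 1" by simp
  qed
  show ?thesis
  proof
    show "stable (predecessor c v Z)"
      using \<open>stable c\<close> by (rule stable_predecessor)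
    show "subset_sums_ge_choose2 (predecessor c v Z)"
      using subset_sums_predecessor[OF sums _ Z(4,3) margin] Z(1) by blast
    have "deficient (predecessor c v Z) \<subset> deficient c"
      using deficient_predecessor[of c v Z] Z(1) v by auto
    then show "card (deficient (predecessor c v Z)) < card (deficient c)"
      by (rule psubset_card_mono[OF finite])
    show "chain_step \<mu> (ssm_topple p) (predecessor c v Z) c"
      using Y(1) Y_full Z(1,4) v card_YZ \<mu> \<open>stable c\<close>
      by (intro chain_step_predecessor[OF p]) auto
  qed
qed

lemma chain_steps_ssm_from_max_stable:
  fixes c :: "'n::finite \<Rightarrow> nat"
  assumes p: "0 < p" "p < 1" and \<mu>: "\<forall>i. \<mu> i > 0"
    and "subset_sums_ge_choose2 c" "stable c"
  shows "(chain_step \<mu> (ssm_topple p))\<^sup>*\<^sup>* max_stable c"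
  using assms(4,5)
proof (induction "card (deficient c)" arbitrary: c rule: less_induct)
  case less
  show ?case
  proof (cases "deficient c = {}")
    case True
    then have "c = max_stable"
      using stable_eq_max_stable less.prems(2) by blast
    then show ?thesis by simp
  next
    case False
    then obtain d where d: "stable d" "subset_sums_ge_choose2 d"
      "card (deficient d) < card (deficient c)" "chain_step \<mu> (ssm_topple p) d c"
      using exists_predecessor[OF p \<mu> less.prems] by blast
    moreover have "(chain_step \<mu> (ssm_topple p))\<^sup>*\<^sup>* max_stable d"
      using less.hyps d(1-3) by blast
    ultimately show ?thesis
      using rtranclp.rtrancl_into_rtrancl by metis
  qed
qed

lemma SR_iff_subset_sums:
  assumes "0 < p" "p < 1" "\<forall>i. \<mu> i > 0"
  shows "SR p \<mu> c \<longleftrightarrow> stable c \<and> subset_sums_ge_choose2 c"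
  unfolding SR_def recurrent_iff_reachable_from_max_stable[OF assms(3)]
  using chain_steps_ssm_preserve_subset_sums chain_steps_ssm_from_max_stable[OF assms] by blast

section \<open>Convex hull of the deterministic recurrent states\<close>

lemma subset_sums_equal_pair_pos:
  assumes "subset_sums_ge_choose2 c" "i \<noteq> j" "c i = c j"
  shows "1 \<le> c i"
proof -
  have "card {i, j} choose 2 \<le> sum c {i, j}"
    using assms(1) unfolding subset_sums_ge_choose2_def by blast
  then show ?thesis
    using assms(2,3) by (simp add: numeral_2_eq_2)
qed

text \<open>Moving a grain between two vertices of equal height keeps the bound: for a set
  \<open>A\<close> that loses the grain, the bounds for \<open>A - {j}\<close> and \<open>insert i A\<close> add up to a strict
  bound for \<open>A\<close>.\<close>

lemma subset_sums_move_grain: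
  fixes c :: "'n::finite \<Rightarrow> nat"
  assumes sums: "subset_sums_ge_choose2 c" and ij: "i \<noteq> j" "c i = c j"
  shows "subset_sums_ge_choose2 (c(i := c i + 1, j := c j - 1))"
  unfolding subset_sums_ge_choose2_def
proof
  fix A :: "'n set"
  let ?c = "c(i := c i + 1, j := c j - 1)"
  have "1 \<le> c j"
    using subset_sums_equal_pair_pos[OF sums ij] ij by simp
  have bound: "card B choose 2 \<le> sum c B" for B
    using sums unfolding subset_sums_ge_choose2_def by blast
  have "sum ?c A + (if j \<in> A then 1 else 0) = (\<Sum>w\<in>A. ?c w + (if w = j then 1 else 0))"
    by (simp add: sum.distrib)
  also have "\<dots> = (\<Sum>w\<in>A. c w + (if w = i then 1 else 0))"
    using ij \<open>1 \<le> c j\<close> by (intro sum.cong) auto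
  also have "\<dots> = sum c A + (if i \<in> A then 1 else 0)"
    by (simp add: sum.distrib)
  finally have moved: "sum ?c A + (if j \<in> A then 1 else 0) = sum c A + (if i \<in> A then 1 else 0)" .
  show "card A choose 2 \<le> sum ?c A"
  proof (cases "j \<in> A \<and> i \<notin> A")
    case False
    then have "sum c A \<le> sum ?c A"
      using moved by (auto split: if_splits)
    then show ?thesis
      using bound[of A] by linarith
  next
    case True
    then obtain k where k: "card A = Suc k"
      by (metis card_Suc_Diff1 finite)
    have "card (insert i A) = Suc (Suc k)" "sum c (insert i A) = c i + sum c A"
      using True k by simp_all
    then have "Suc (Suc k) choose 2 \<le> c i + sum c A"
      using bound[of "insert i A"] by simp
    moreover have "card (A - {j}) = k" "sum c (A - {j}) + c j = sum c A"
      using True k by (simp_all add: sum_diff1_nat member_le_sum)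
    then have "(k choose 2) + c j \<le> sum c A"
      using bound[of "A - {j}"] by simp
    ultimately have "Suc k choose 2 < sum c A"
      using ij(2) by (simp add: Suc_choose_two)
    then show ?thesis
      using moved True k by simp
  qed
qed

lemma sum_squares_move_grain:
  fixes c :: "'n::finite \<Rightarrow> nat"
  assumes "i \<noteq> j" "c i = c j" "1 \<le> c j"
  shows "(\<Sum>w\<in>UNIV. (c(i := c i + 1, j := c j - 1)) w ^ 2) = (\<Sum>w\<in>UNIV. c w ^ 2) + 2"
proof -
  have split: "sum f UNIV = f i + f j + sum f (UNIV - {i, j})" for f :: "'n \<Rightarrow> nat"
    using assms(1) sum.remove[of UNIV i f] sum.remove[of "UNIV - {i}" j f]
    by (simp add: insert_commute Diff_insert2[symmetric])
  have "(c j + 1)\<^sup>2 + (c j - 1)\<^sup>2 = c j ^ 2 + c j ^ 2 + 2"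
    using assms(3) by (cases "c j") (simp_all add: power2_eq_square)
  then show ?thesis
    using assms(1,2) split[of "\<lambda>w. (c(i := c i + 1, j := c j - 1)) w ^ 2"] split[of "\<lambda>w. c w ^ 2"]
    by simp
qed

lemma stable_sum_squares_le:
  fixes c :: "'n::finite \<Rightarrow> nat"
  assumes "stable c"
  shows "(\<Sum>w\<in>UNIV. c w ^ 2) \<le> CARD('n) * (CARD('n) - 1)^2"
  using sum_bounded_above[of UNIV "\<lambda>w. c w ^ 2" "(CARD('n) - 1)^2"] assms
  by (simp add: stable_def power_mono)

lemma exists_equal_deficient_pair:
  fixes c :: "'n::finite \<Rightarrow> nat"
  assumes "\<not> no_forbidden_subconfig c"
  obtains i j where "i \<noteq> j" "c i = c j" "i \<in> deficient c"
proof -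
  obtain A :: "'n set" where A: "A \<noteq> {}" "\<forall>i\<in>A. c i + 1 < card A"
    using assms unfolding no_forbidden_subconfig_def by (auto simp: not_le)
  have "c ` A \<subseteq> {..< card A - 1}"
    using A(2) by auto
  then have "card (c ` A) < card A"
    using A(1) by (metis card_lessThan card_mono finite_lessThan card_gt_0_iff diff_less
        le_less_trans finite zero_less_one)
  then obtain i j where "i \<in> A" "j \<in> A" "i \<noteq> j" "c i = c j"
    by (metis card_image inj_on_def less_irrefl)
  moreover have "card A \<le> CARD('n)"
    by (simp add: card_mono)
  ultimately show ?thesis
    using that A(2) by (force simp: deficient_def)
qed

text \<open>If \<open>c\<close> has a forbidden subconfiguration, it is the midpoint of two configurations
  obtained by moving a grain between two deficient vertices of equal height; these satisfy the
  bound and have a larger sum of squares, which is bounded on stable configurations.\<close>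

lemma subset_sums_in_convex_hull:
  fixes c :: "'n::finite \<Rightarrow> nat"
  assumes "subset_sums_ge_choose2 c" "stable c"
  shows "vec_of c \<in> convex hull {vec_of d | d. no_forbidden_subconfig d \<and> stable d}"
  using assms
proof (induction "CARD('n) * (CARD('n) - 1)^2 - (\<Sum>w\<in>UNIV. c w ^ 2)" arbitrary: c rule: less_induct)
  case less
  let ?H = "convex hull {vec_of d | d :: 'n \<Rightarrow> nat. no_forbidden_subconfig d \<and> stable d}"
  show ?case
  proof (cases "no_forbidden_subconfig c")
    case True
    then show ?thesis
      using less.prems by (intro hull_inc) blast
  next
    case False
    then obtain i j where ij: "i \<noteq> j" "c i = c j" "i \<in> deficient c"
      by (rule exists_equal_deficient_pair)
    define c1 c2 where "c1 = c(i := c i + 1, j := c j - 1)" and "c2 = c(j := c j + 1, i := c i - 1)"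
    have "1 \<le> c i"
      using subset_sums_equal_pair_pos[OF less.prems(1) ij(1,2)] .
    have in_hull: "vec_of d \<in> ?H"
      if d: "d = c(k := c k + 1, l := c l - 1)" "k \<noteq> l" "c k = c l" "c k < CARD('n) - 1" for d k l
    proof -
      have "stable d"
        using less.prems(2) d by (auto simp: stable_def)
      have "1 \<le> c l"
        using subset_sums_equal_pair_pos[OF less.prems(1) d(2,3)] d(3) by simp
      then have "(\<Sum>w\<in>UNIV. d w ^ 2) = (\<Sum>w\<in>UNIV. c w ^ 2) + 2"
        using sum_squares_move_grain[of k l c] d by simp
      moreover have "(\<Sum>w\<in>UNIV. d w ^ 2) \<le> CARD('n) * (CARD('n) - 1)^2"
        using \<open>stable d\<close> by (rule stable_sum_squares_le)
      ultimately show ?thesis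
        using less.hyps[of d] subset_sums_move_grain[OF less.prems(1) d(2,3)] \<open>stable d\<close> d(1)
        by simp
    qed
    have "vec_of c1 \<in> ?H"
      using ij by (intro in_hull[of c1 i j]) (auto simp: c1_def deficient_def)
    moreover have "vec_of c2 \<in> ?H"
      using ij by (intro in_hull[of c2 j i]) (auto simp: c2_def deficient_def)
    ultimately have "(1/2::real) *\<^sub>R vec_of c1 + (1/2::real) *\<^sub>R vec_of c2 \<in> ?H"
      by (intro convexD[OF convex_convex_hull]) auto
    moreover have "(1/2::real) *\<^sub>R vec_of c1 + (1/2::real) *\<^sub>R vec_of c2 = vec_of c"
      using ij \<open>1 \<le> c i\<close> by (auto simp: vec_eq_iff vec_of_def c1_def c2_def of_nat_diff field_simps)
    ultimately show ?thesis
      by simp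
  qed
qed

definition choose2_polytope :: "(real ^ 'n::finite) set" where
  "choose2_polytope = {x. (\<forall>A. real (card A choose 2) \<le> (\<Sum>i\<in>A. x $ i)) \<and>
                          (\<forall>i. x $ i \<le> real (CARD('n) - 1))}"

lemma vec_of_in_choose2_polytope:
  fixes c :: "'n::finite \<Rightarrow> nat"
  shows "vec_of c \<in> choose2_polytope \<longleftrightarrow> subset_sums_ge_choose2 c \<and> stable c"
proof -
  have sum_eq: "(\<Sum>i\<in>A. vec_of c $ i) = real (sum c A)" for A
    by (simp add: vec_of_def)
  have nth_eq: "vec_of c $ i = real (c i)" for i
    by (simp add: vec_of_def)
  show ?thesis
    unfolding choose2_polytope_def mem_Collect_eq sum_eq nth_eq of_nat_le_iff
      subset_sums_ge_choose2_def stable_def ..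
qed

lemma convex_choose2_polytope: "convex (choose2_polytope :: (real ^ 'n::finite) set)"
proof -
  have sums: "convex {x :: real ^ 'n. a \<le> (\<Sum>i\<in>A. x $ i)}" for a A
  proof -
    have "(\<Sum>i\<in>A. x $ i) = (\<chi> i. if i \<in> A then 1 else 0) \<bullet> x" for x :: "real ^ 'n"
      unfolding inner_vec_def by (simp add: if_distrib[of "\<lambda>a. a * _"] sum.If_cases)
    then show ?thesis
      using convex_halfspace_ge[of a "\<chi> i. if i \<in> A then 1 else 0"] by simp
  qed
  have components: "convex {x :: real ^ 'n. x $ i \<le> b}" for i b
    using convex_halfspace_le[of "axis i 1" b] by (simp add: cart_eq_inner_axis inner_commute)
  have polytope_eq: "(choose2_polytope :: (real ^ 'n) set) =
      (\<Inter>A. {x. real (card A choose 2) \<le> (\<Sum>i\<in>A. x $ i)}) \<inter> (\<Inter>i. {x. x $ i \<le> real (CARD('n) - 1)})"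
    by (auto simp: choose2_polytope_def)
  show ?thesis
    unfolding polytope_eq by (intro convex_Int convex_INT sums components)
qed

text \<open>Only the support of \<open>\<mu>\<close> matters.\<close>

theorem theorem4p1:
  fixes p :: real and \<mu> :: "'n::finite \<Rightarrow> real" and c :: "'n \<Rightarrow> nat"
  assumes "0 < p" and "p < 1"
    and "\<forall>i. \<mu> i > 0" and "sum \<mu> UNIV = 1"
  shows "SR p \<mu> c \<longleftrightarrow> vec_of c \<in> convex hull {vec_of d | d. DR \<mu> d}"
proof
  assume "SR p \<mu> c"
  then have "vec_of c \<in> convex hull {vec_of d | d. no_forbidden_subconfig d \<and> stable d}"
    using SR_iff_subset_sums[OF assms(1-3)] subset_sums_in_convex_hull by blast
  moreover have "{vec_of d | d. no_forbidden_subconfig d \<and> stable d} \<subseteq> {vec_of d | d. DR \<mu> d}"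
    using DR_if_no_forbidden_subconfig[OF assms(3)] by blast
  ultimately show "vec_of c \<in> convex hull {vec_of d | d. DR \<mu> d}"
    using hull_mono by blast
next
  assume "vec_of c \<in> convex hull {vec_of d | d. DR \<mu> d}"
  moreover have "{vec_of d | d. DR \<mu> d} \<subseteq> choose2_polytope"
    using DR_imp_SR[OF assms(1,3)] SR_iff_subset_sums[OF assms(1-3)] vec_of_in_choose2_polytope
    by blast
  ultimately have "vec_of c \<in> choose2_polytope"
    using convex_choose2_polytope hull_minimal by blast
  then show "SR p \<mu> c"
    using SR_iff_subset_sums[OF assms(1-3)] vec_of_in_choose2_polytope by blast
qed

end
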